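(* Call a group a generalized torsion group if every non-trivial element of it is a generalized torsion element. Then: (i) every quotient of a generalized torsion group is a generalized torsion group; (ii) the direct limit of a directed system of generalized torsion groups is a generalized torsion group; (iii) if $1\to K\to G\to Q\to 1$ is an exact sequence of groups with $K$ and $Q$ generalized torsion groups, then $G$ is a generalized torsion group; (iv) there exists a generalized torsion group having a subgroup which is not a generalized torsion group.
   Context: For $g,x$ in a group, $g^{x}:=xgx^{-1}$. A non-trivial element $g$ of a group $G$ is a generalized torsion element if there exist a positive integer $n$ and $x_1,\ldots,x_n\in G$ with $g^{x_1}g^{x_2}\cdots g^{x_n}=1$. *)

theory Defs
  imports "HOL-Algebra.Coset"
begin

definition conjg :: "('a, 'b) monoid_scheme \<Rightarrow> 'a \<Rightarrow> 'a \<Rightarrow> 'a" where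
  "conjg G g x = x \<otimes>\<^bsub>G\<^esub> g \<otimes>\<^bsub>G\<^esub> inv\<^bsub>G\<^esub> x"

definition gen_torsion :: "('a, 'b) monoid_scheme \<Rightarrow> 'a \<Rightarrow> bool" where
  "gen_torsion G g \<longleftrightarrow> g \<in> carrier G \<and> g \<noteq> \<one>\<^bsub>G\<^esub> \<and>
     (\<exists>xs. xs \<noteq> [] \<and> set xs \<subseteq> carrier G \<and>
        foldr (\<lambda>x acc. conjg G g x \<otimes>\<^bsub>G\<^esub> acc) xs \<one>\<^bsub>G\<^esub> = \<one>\<^bsub>G\<^esub>)"

definition gt_group :: "('a, 'b) monoid_scheme \<Rightarrow> bool" where
  "gt_group G \<longleftrightarrow> group G \<and> (\<forall>g \<in> carrier G. g \<noteq> \<one>\<^bsub>G\<^esub> \<longrightarrow> gen_torsion G g)"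

definition directed_system ::
  "'i set \<Rightarrow> ('i \<Rightarrow> 'i \<Rightarrow> bool) \<Rightarrow> ('i \<Rightarrow> ('a, 'b) monoid_scheme) \<Rightarrow> ('i \<Rightarrow> 'i \<Rightarrow> 'a \<Rightarrow> 'a) \<Rightarrow> bool"
where
  "directed_system I rel G f \<longleftrightarrow>
     I \<noteq> {} \<and>
     (\<forall>i\<in>I. rel i i) \<and>
     (\<forall>i\<in>I. \<forall>j\<in>I. \<forall>k\<in>I. rel i j \<and> rel j k \<longrightarrow> rel i k) \<and>
     (\<forall>i\<in>I. \<forall>j\<in>I. \<exists>k\<in>I. rel i k \<and> rel j k) \<and>
     (\<forall>i\<in>I. group (G i)) \<and>
     (\<forall>i\<in>I. \<forall>j\<in>I. rel i j \<longrightarrow> f i j \<in> hom (G i) (G j)) \<and>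
     (\<forall>i\<in>I. \<forall>x\<in>carrier (G i). f i i x = x) \<and>
     (\<forall>i\<in>I. \<forall>j\<in>I. \<forall>k\<in>I. rel i j \<and> rel j k \<longrightarrow>
        (\<forall>x\<in>carrier (G i). f j k (f i j x) = f i k x))"

definition dl_rel ::
  "'i set \<Rightarrow> ('i \<Rightarrow> 'i \<Rightarrow> bool) \<Rightarrow> ('i \<Rightarrow> ('a, 'b) monoid_scheme) \<Rightarrow> ('i \<Rightarrow> 'i \<Rightarrow> 'a \<Rightarrow> 'a) \<Rightarrow> (('i \<times> 'a) \<times> ('i \<times> 'a)) set"
where
  "dl_rel I rel G f = {((i, x), (j, y)). i \<in> I \<and> j \<in> I \<and> x \<in> carrier (G i) \<and> y \<in> carrier (G j) \<and>
      (\<exists>k\<in>I. rel i k \<and> rel j k \<and> f i k x = f j k y)}"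

definition direct_limit ::
  "'i set \<Rightarrow> ('i \<Rightarrow> 'i \<Rightarrow> bool) \<Rightarrow> ('i \<Rightarrow> ('a, 'b) monoid_scheme) \<Rightarrow> ('i \<Rightarrow> 'i \<Rightarrow> 'a \<Rightarrow> 'a) \<Rightarrow> ('i \<times> 'a) set monoid"
where
  "direct_limit I rel G f =
     \<lparr> carrier = (SIGMA i:I. carrier (G i)) // dl_rel I rel G f,
       mult = (\<lambda>A B. SOME C. \<exists>i x j y k. (i, x) \<in> A \<and> (j, y) \<in> B \<and> k \<in> I \<and> rel i k \<and> rel j k \<and>
                 C = dl_rel I rel G f `` {(k, f i k x \<otimes>\<^bsub>G k\<^esub> f j k y)}),
       one = dl_rel I rel G f `` {(SOME i. i \<in> I, \<one>\<^bsub>G (SOME i. i \<in> I)\<^esub>)} \<rparr>"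

end

theory Submission
  imports Defs "HOL-Library.Nat_Bijection"
begin

text \<open>Write c(g; x_1, ..., x_n) for the product g^x_1 ... g^x_n. Two facts carry the
  whole argument: a homomorphism maps c(g; xs) to c(h g; h xs), and a product of conjugates of
  c(g; xs) is again of the form c(g; ys), with ys nonempty if xs is. The first gives (i), and
  (ii) because every element of a direct limit comes from some G_i by a homomorphism. For
  (iii), lift a relation c(\<pi> g; ys) = 1 of Q to G: then c(g; xs) lies in the kernel, so it is
  trivial or a generalized torsion element, and in both cases so is g by the second fact. For
  (iv), in the infinite dihedral group every reflection is an involution and every translation
  t satisfies t t^s = 1 for a reflection s, whereas in the translation subgroup \<cong> \<int> the
  element 1 has c(1; xs) = length xs \<noteq> 0.\<close>

section \<open>Products of conjugates\<close>

definition conj_prod :: "('a, 'b) monoid_scheme \<Rightarrow> 'a \<Rightarrow> 'a list \<Rightarrow> 'a" where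
  "conj_prod G g xs = foldr (\<lambda>x acc. conjg G g x \<otimes>\<^bsub>G\<^esub> acc) xs \<one>\<^bsub>G\<^esub>"

lemma conj_prod_Nil [simp]: "conj_prod G g [] = \<one>\<^bsub>G\<^esub>"
  by (simp add: conj_prod_def)

lemma conj_prod_Cons [simp]: "conj_prod G g (x # xs) = conjg G g x \<otimes>\<^bsub>G\<^esub> conj_prod G g xs"
  by (simp add: conj_prod_def)

lemma gen_torsion_iff_conj_prod:
  "gen_torsion G g \<longleftrightarrow> g \<in> carrier G \<and> g \<noteq> \<one>\<^bsub>G\<^esub> \<and>
     (\<exists>xs. xs \<noteq> [] \<and> set xs \<subseteq> carrier G \<and> conj_prod G g xs = \<one>\<^bsub>G\<^esub>)"
  by (simp add: gen_torsion_def conj_prod_def)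

context group
begin

lemma conjg_closed [simp]: "g \<in> carrier G \<Longrightarrow> x \<in> carrier G \<Longrightarrow> conjg G g x \<in> carrier G"
  by (simp add: conjg_def)

lemma conj_prod_closed [simp]:
  "g \<in> carrier G \<Longrightarrow> set xs \<subseteq> carrier G \<Longrightarrow> conj_prod G g xs \<in> carrier G"
  by (induction xs) auto

lemma conj_prod_append:
  "g \<in> carrier G \<Longrightarrow> set xs \<subseteq> carrier G \<Longrightarrow> set ys \<subseteq> carrier G \<Longrightarrow>
   conj_prod G g (xs @ ys) = conj_prod G g xs \<otimes> conj_prod G g ys"
  by (induction xs) (auto simp: m_assoc)

lemma conjg_one [simp]: "w \<in> carrier G \<Longrightarrow> conjg G \<one> w = \<one>"
  by (simp add: conjg_def)

lemma conjg_mult: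
  assumes "a \<in> carrier G" "b \<in> carrier G" "w \<in> carrier G"
  shows "conjg G (a \<otimes> b) w = conjg G a w \<otimes> conjg G b w"
proof -
  have "inv w \<otimes> (w \<otimes> c) = c" if "c \<in> carrier G" for c
    using that assms by (simp flip: m_assoc)
  with assms show ?thesis
    by (simp add: conjg_def m_assoc)
qed

lemma conjg_conjg:
  "g \<in> carrier G \<Longrightarrow> x \<in> carrier G \<Longrightarrow> w \<in> carrier G \<Longrightarrow>
   conjg G (conjg G g x) w = conjg G g (w \<otimes> x)"
  by (simp add: conjg_def m_assoc inv_mult_group)

lemma conjg_conj_prod:
  "g \<in> carrier G \<Longrightarrow> set xs \<subseteq> carrier G \<Longrightarrow> w \<in> carrier G \<Longrightarrow>
   conjg G (conj_prod G g xs) w = conj_prod G g (map ((\<otimes>) w) xs)"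
  by (induction xs) (auto simp: conjg_mult conjg_conjg)

lemma conj_prod_conj_prod:
  assumes "g \<in> carrier G" "set xs \<subseteq> carrier G" "set ws \<subseteq> carrier G"
  shows "conj_prod G (conj_prod G g xs) ws = conj_prod G g (concat (map (\<lambda>w. map ((\<otimes>) w) xs) ws))"
  using assms(3)
proof (induction ws)
  case (Cons w ws)
  have "set (map ((\<otimes>) w) xs) \<subseteq> carrier G" "set (concat (map (\<lambda>w. map ((\<otimes>) w) xs) ws)) \<subseteq> carrier G"
    using Cons.prems assms(2) by auto
  with Cons assms(1,2) show ?case
    by (simp add: conjg_conj_prod conj_prod_append)
qed simp

lemma gen_torsion_of_conj_prod:
  assumes g: "g \<in> carrier G" "g \<noteq> \<one>" and xs: "xs \<noteq> []" "set xs \<subseteq> carrier G"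
    and k: "conj_prod G g xs = \<one> \<or> gen_torsion G (conj_prod G g xs)"
  shows "gen_torsion G g"
  using k
proof
  assume "conj_prod G g xs = \<one>"
  with g xs show ?thesis
    unfolding gen_torsion_iff_conj_prod by blast
next
  assume "gen_torsion G (conj_prod G g xs)"
  then obtain ws where ws: "ws \<noteq> []" "set ws \<subseteq> carrier G" "conj_prod G (conj_prod G g xs) ws = \<one>"
    unfolding gen_torsion_iff_conj_prod by blast
  let ?ys = "concat (map (\<lambda>w. map ((\<otimes>) w) xs) ws)"
  have "conj_prod G g ?ys = \<one>"
    using ws conj_prod_conj_prod[OF g(1) xs(2) ws(2)] by simp
  moreover have "?ys \<noteq> []"
    using xs(1) ws(1) by (cases ws) auto
  moreover have "set ?ys \<subseteq> carrier G"
    using xs(2) ws(2) by auto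
  ultimately show ?thesis
    using g unfolding gen_torsion_iff_conj_prod by blast
qed

end

context group_hom
begin

lemma conjg_hom: "g \<in> carrier G \<Longrightarrow> x \<in> carrier G \<Longrightarrow> h (conjg G g x) = conjg H (h g) (h x)"
  by (simp add: conjg_def)

lemma conj_prod_hom:
  "g \<in> carrier G \<Longrightarrow> set xs \<subseteq> carrier G \<Longrightarrow> h (conj_prod G g xs) = conj_prod H (h g) (map h xs)"
  by (induction xs) (auto simp: conjg_hom)

lemma gen_torsion_hom_image:
  assumes "gen_torsion G g" "h g \<noteq> \<one>\<^bsub>H\<^esub>"
  shows "gen_torsion H (h g)"
proof -
  obtain xs where xs: "xs \<noteq> []" "set xs \<subseteq> carrier G" "conj_prod G g xs = \<one>\<^bsub>G\<^esub>"
    using assms(1) unfolding gen_torsion_iff_conj_prod by blast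
  have "conj_prod H (h g) (map h xs) = \<one>\<^bsub>H\<^esub>"
    using xs assms(1) by (simp add: gen_torsion_def flip: conj_prod_hom)
  moreover have "set (map h xs) \<subseteq> carrier H"
    using xs(2) by auto
  ultimately show ?thesis
    using assms xs(1) unfolding gen_torsion_iff_conj_prod by (metis Nil_is_map_conv hom_closed)
qed

end

lemma gt_group_surj_hom_image:
  assumes G: "gt_group G" and "group H" "h \<in> hom G H" "h ` carrier G = carrier H"
  shows "gt_group H"
proof -
  interpret group_hom G H h
    using assms by (simp add: gt_group_def group_hom_def group_hom_axioms_def)
  show ?thesis
    unfolding gt_group_def
  proof (intro conjI ballI impI)
    fix y assume y: "y \<in> carrier H" "y \<noteq> \<one>\<^bsub>H\<^esub>"
    with assms(4) obtain g where g: "g \<in> carrier G" "y = h g"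
      by blast
    with y have "g \<noteq> \<one>\<^bsub>G\<^esub>"
      by auto
    with g G have "gen_torsion G g"
      by (simp add: gt_group_def)
    with g y show "gen_torsion H y"
      by (simp add: gen_torsion_hom_image)
  qed fact
qed

lemma gt_group_FactGroup:
  assumes "gt_group G" "N \<lhd> G"
  shows "gt_group (G Mod N)"
  using assms(1) normal.factorgroup_is_group[OF assms(2)] normal.r_coset_hom_Mod[OF assms(2)]
  by (rule gt_group_surj_hom_image) (simp add: carrier_FactGroup)

lemma gen_torsion_image_of_gt_group:
  assumes "gt_group K" "group G" "\<iota> \<in> hom K G" "k \<in> \<iota> ` carrier K" "k \<noteq> \<one>\<^bsub>G\<^esub>"
  shows "gen_torsion G k"
proof -
  interpret group_hom K G \<iota>
    using assms by (simp add: gt_group_def group_hom_def group_hom_axioms_def)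
  obtain a where a: "a \<in> carrier K" "k = \<iota> a"
    using assms(4) by blast
  with assms(5) have "a \<noteq> \<one>\<^bsub>K\<^esub>"
    by auto
  with a assms(1) have "gen_torsion K a"
    by (simp add: gt_group_def)
  with a assms(5) show ?thesis
    by (simp add: gen_torsion_hom_image)
qed

lemma gt_group_extension:
  assumes "group G" and Q: "gt_group Q" and "\<pi> \<in> hom G Q" "\<pi> ` carrier G = carrier Q"
    and ker_gen_torsion: "\<And>k. k \<in> kernel G Q \<pi> \<Longrightarrow> k \<noteq> \<one>\<^bsub>G\<^esub> \<Longrightarrow> gen_torsion G k"
  shows "gt_group G"
proof -
  interpret group_hom G Q \<pi>
    using assms by (simp add: gt_group_def group_hom_def group_hom_axioms_def)
  show ?thesis
    unfolding gt_group_def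
  proof (intro conjI ballI impI)
    fix g assume g: "g \<in> carrier G" "g \<noteq> \<one>\<^bsub>G\<^esub>"
    show "gen_torsion G g"
    proof (cases "\<pi> g = \<one>\<^bsub>Q\<^esub>")
      case True
      with g have "g \<in> kernel G Q \<pi>"
        by (simp add: kernel_def)
      with g ker_gen_torsion show ?thesis
        by blast
    next
      case False
      with g Q have "gen_torsion Q (\<pi> g)"
        by (simp add: gt_group_def)
      then obtain ys where ys: "ys \<noteq> []" "set ys \<subseteq> carrier Q" "conj_prod Q (\<pi> g) ys = \<one>\<^bsub>Q\<^esub>"
        unfolding gen_torsion_iff_conj_prod by blast
      have "ys \<in> map \<pi> ` lists (carrier G)"
        using ys(2) assms(4) lists_image[of \<pi> "carrier G"] by auto
      then obtain xs where xs: "set xs \<subseteq> carrier G" "ys = map \<pi> xs"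
        by blast
      have "\<pi> (conj_prod G g xs) = \<one>\<^bsub>Q\<^esub>"
        using ys xs g by (simp add: conj_prod_hom)
      then have "conj_prod G g xs \<in> kernel G Q \<pi>"
        using g xs by (simp add: kernel_def)
      with ker_gen_torsion have "conj_prod G g xs = \<one>\<^bsub>G\<^esub> \<or> gen_torsion G (conj_prod G g xs)"
        by blast
      with g xs ys(1) show ?thesis
        by (simp add: G.gen_torsion_of_conj_prod)
    qed
  qed fact
qed

section \<open>Direct limits\<close>

locale group_direct_system =
  fixes I :: "'i set" and rel :: "'i \<Rightarrow> 'i \<Rightarrow> bool"
    and G :: "'i \<Rightarrow> ('c, 'd) monoid_scheme" and f :: "'i \<Rightarrow> 'i \<Rightarrow> 'c \<Rightarrow> 'c"
  assumes index_nonempty: "I \<noteq> {}"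
    and rel_refl: "i \<in> I \<Longrightarrow> rel i i"
    and rel_trans: "i \<in> I \<Longrightarrow> j \<in> I \<Longrightarrow> k \<in> I \<Longrightarrow> rel i j \<Longrightarrow> rel j k \<Longrightarrow> rel i k"
    and rel_directed: "i \<in> I \<Longrightarrow> j \<in> I \<Longrightarrow> \<exists>k\<in>I. rel i k \<and> rel j k"
    and group_G: "i \<in> I \<Longrightarrow> group (G i)"
    and transition_hom: "i \<in> I \<Longrightarrow> j \<in> I \<Longrightarrow> rel i j \<Longrightarrow> f i j \<in> hom (G i) (G j)"
    and transition_id: "i \<in> I \<Longrightarrow> x \<in> carrier (G i) \<Longrightarrow> f i i x = x"
    and transition_comp: "i \<in> I \<Longrightarrow> j \<in> I \<Longrightarrow> k \<in> I \<Longrightarrow> rel i j \<Longrightarrow> rel j k \<Longrightarrow>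
      x \<in> carrier (G i) \<Longrightarrow> f j k (f i j x) = f i k x"

lemma group_direct_systemI: "directed_system I rel G f \<Longrightarrow> group_direct_system I rel G f"
  unfolding directed_system_def by (rule group_direct_system.intro; elim conjE; metis)

context group_direct_system
begin

abbreviation "R \<equiv> dl_rel I rel G f"
abbreviation "DL \<equiv> direct_limit I rel G f"

lemma transition_group_hom: "i \<in> I \<Longrightarrow> j \<in> I \<Longrightarrow> rel i j \<Longrightarrow> group_hom (G i) (G j) (f i j)"
  by (simp add: group_G transition_hom group_hom_def group_hom_axioms_def)

lemma transition_closed: "i \<in> I \<Longrightarrow> j \<in> I \<Longrightarrow> rel i j \<Longrightarrow> x \<in> carrier (G i) \<Longrightarrow> f i j x \<in> carrier (G j)"
  by (meson transition_hom hom_in_carrier)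

lemma rel_upper_bound3:
  assumes "i \<in> I" "j \<in> I" "l \<in> I"
  shows "\<exists>k\<in>I. rel i k \<and> rel j k \<and> rel l k"
proof -
  obtain k1 where k1: "k1 \<in> I" "rel i k1" "rel j k1"
    using rel_directed assms by blast
  obtain k where "k \<in> I" "rel k1 k" "rel l k"
    using rel_directed k1(1) assms(3) by blast
  with k1 assms show ?thesis
    using rel_trans by blast
qed

lemma transition_eq_upward:
  assumes "i \<in> I" "j \<in> I" "k \<in> I" "m \<in> I" "rel i k" "rel j k" "rel k m"
    and "x \<in> carrier (G i)" "y \<in> carrier (G j)" "f i k x = f j k y"
  shows "f i m x = f j m y"
  using assms transition_comp[of i k m x] transition_comp[of j k m y] by simp

lemma dl_rel_iff:
  "((i, x), (j, y)) \<in> R \<longleftrightarrow> i \<in> I \<and> j \<in> I \<and> x \<in> carrier (G i) \<and> y \<in> carrier (G j) \<and>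
     (\<exists>k\<in>I. rel i k \<and> rel j k \<and> f i k x = f j k y)"
  by (simp add: dl_rel_def)

lemma equiv_dl_rel: "equiv (SIGMA i:I. carrier (G i)) R"
proof (rule equivI)
  show "R \<subseteq> (SIGMA i:I. carrier (G i)) \<times> (SIGMA i:I. carrier (G i))"
    by (auto simp: dl_rel_def)
  show "refl_on (SIGMA i:I. carrier (G i)) R"
  proof (rule refl_onI)
    fix p assume "p \<in> (SIGMA i:I. carrier (G i))"
    then obtain i x where "p = (i, x)" "i \<in> I" "x \<in> carrier (G i)"
      by blast
    then show "(p, p) \<in> R"
      using rel_refl[of i] by (simp add: dl_rel_iff) blast
  qed
  show "sym R"
    by (rule symI) (auto simp: dl_rel_def)
  show "trans R"
  proof (rule transI)
    fix p q r assume pq: "(p, q) \<in> R" and qr: "(q, r) \<in> R"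
    obtain i x where p: "p = (i, x)" by fastforce
    obtain j y where q: "q = (j, y)" by fastforce
    obtain l z where r: "r = (l, z)" by fastforce
    from pq obtain k1 where k1: "i \<in> I" "j \<in> I" "x \<in> carrier (G i)" "y \<in> carrier (G j)"
      "k1 \<in> I" "rel i k1" "rel j k1" "f i k1 x = f j k1 y"
      unfolding p q dl_rel_iff by blast
    from qr obtain k2 where k2: "l \<in> I" "z \<in> carrier (G l)"
      "k2 \<in> I" "rel j k2" "rel l k2" "f j k2 y = f l k2 z"
      unfolding q r dl_rel_iff by blast
    obtain m where m: "m \<in> I" "rel k1 m" "rel k2 m"
      using rel_directed k1(5) k2(3) by blast
    have "f i m x = f j m y"
      using transition_eq_upward[of i j k1 m x y] k1 m by simp
    also have "\<dots> = f l m z"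
      using transition_eq_upward[of j l k2 m y z] k1 k2 m by simp
    finally have "f i m x = f l m z" .
    moreover have "rel i m" "rel l m"
      using rel_trans k1 k2 m by blast+
    ultimately show "(p, r) \<in> R"
      unfolding p r dl_rel_iff using k1 k2 m by blast
  qed
qed

definition dl_class :: "'i \<Rightarrow> 'c \<Rightarrow> ('i \<times> 'c) set" where
  "dl_class i x = R `` {(i, x)}"

lemma carrier_direct_limit: "carrier DL = (SIGMA i:I. carrier (G i)) // R"
  by (simp add: direct_limit_def)

lemma dl_class_in_carrier: "i \<in> I \<Longrightarrow> x \<in> carrier (G i) \<Longrightarrow> dl_class i x \<in> carrier DL"
  unfolding carrier_direct_limit dl_class_def by (rule quotientI) simp

lemma carrier_direct_limitE:
  assumes "A \<in> carrier DL"
  obtains i x where "i \<in> I" "x \<in> carrier (G i)" "A = dl_class i x"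
  using assms unfolding carrier_direct_limit dl_class_def by (auto elim: quotientE)

lemma dl_class_self: "i \<in> I \<Longrightarrow> x \<in> carrier (G i) \<Longrightarrow> (i, x) \<in> dl_class i x"
  unfolding dl_class_def by (rule equiv_class_self[OF equiv_dl_rel]) simp

lemma dl_class_eq_iff:
  "i \<in> I \<Longrightarrow> j \<in> I \<Longrightarrow> x \<in> carrier (G i) \<Longrightarrow> y \<in> carrier (G j) \<Longrightarrow>
   dl_class i x = dl_class j y \<longleftrightarrow> ((i, x), (j, y)) \<in> R"
  unfolding dl_class_def by (rule eq_equiv_class_iff[OF equiv_dl_rel]) auto

lemma dl_class_transition:
  "i \<in> I \<Longrightarrow> k \<in> I \<Longrightarrow> rel i k \<Longrightarrow> x \<in> carrier (G i) \<Longrightarrow> dl_class i x = dl_class k (f i k x)"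
  using transition_closed transition_id[of k "f i k x"] rel_refl
  by (subst dl_class_eq_iff) (auto simp: dl_rel_iff)

lemma dl_class_mult_transition:
  assumes "i \<in> I" "j \<in> I" "k \<in> I" "m \<in> I" "rel i k" "rel j k" "rel k m"
    and "x \<in> carrier (G i)" "y \<in> carrier (G j)"
  shows "dl_class k (f i k x \<otimes>\<^bsub>G k\<^esub> f j k y) = dl_class m (f i m x \<otimes>\<^bsub>G m\<^esub> f j m y)"
proof -
  interpret group_hom "G k" "G m" "f k m"
    using assms transition_group_hom by blast
  have "f i k x \<in> carrier (G k)" "f j k y \<in> carrier (G k)"
    using assms transition_closed by auto
  then show ?thesis
    using assms by (simp add: dl_class_transition[of k m] transition_comp)
qed

lemma mult_dl_class:
  assumes ij: "i \<in> I" "j \<in> I" "x \<in> carrier (G i)" "y \<in> carrier (G j)"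
    and k: "k \<in> I" "rel i k" "rel j k"
  shows "dl_class i x \<otimes>\<^bsub>DL\<^esub> dl_class j y = dl_class k (f i k x \<otimes>\<^bsub>G k\<^esub> f j k y)"
proof -
  txt \<open>The product in \<^const>\<open>direct_limit\<close> is a choice among the products of all
    representatives; they agree because any two become equal at a common upper bound.\<close>
  let ?P = "\<lambda>C. \<exists>i' x' j' y' k'. (i', x') \<in> dl_class i x \<and> (j', y') \<in> dl_class j y \<and>
    k' \<in> I \<and> rel i' k' \<and> rel j' k' \<and> C = R `` {(k', f i' k' x' \<otimes>\<^bsub>G k'\<^esub> f j' k' y')}"
  have "dl_class i x \<otimes>\<^bsub>DL\<^esub> dl_class j y = (SOME C. ?P C)"
    by (simp add: direct_limit_def)
  also have "\<dots> = dl_class k (f i k x \<otimes>\<^bsub>G k\<^esub> f j k y)"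
  proof (rule someI2)
    show "?P (dl_class k (f i k x \<otimes>\<^bsub>G k\<^esub> f j k y))"
      using ij k dl_class_self unfolding dl_class_def by blast
  next
    fix C assume "?P C"
    then obtain i' x' j' y' k' where reps: "((i, x), (i', x')) \<in> R" "((j, y), (j', y')) \<in> R"
      and k': "k' \<in> I" "rel i' k'" "rel j' k'" and C: "C = dl_class k' (f i' k' x' \<otimes>\<^bsub>G k'\<^esub> f j' k' y')"
      unfolding dl_class_def by auto
    from reps obtain m1 m2 where
      m1: "i' \<in> I" "x' \<in> carrier (G i')" "m1 \<in> I" "rel i m1" "rel i' m1" "f i m1 x = f i' m1 x'" and
      m2: "j' \<in> I" "y' \<in> carrier (G j')" "m2 \<in> I" "rel j m2" "rel j' m2" "f j m2 y = f j' m2 y'"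
      unfolding dl_rel_iff by blast
    obtain n where n: "n \<in> I" "rel k n" "rel k' n"
      using rel_directed k k' by blast
    obtain m where m: "m \<in> I" "rel n m" "rel m1 m" "rel m2 m"
      using rel_upper_bound3 n m1 m2 by blast
    have "rel k m" "rel k' m"
      using rel_trans n m k k' by blast+
    moreover have "f i m x = f i' m x'" "f j m y = f j' m y'"
      using transition_eq_upward ij m1 m2 m by blast+
    ultimately show "C = dl_class k (f i k x \<otimes>\<^bsub>G k\<^esub> f j k y)"
      using C ij k k' m1 m2 m dl_class_mult_transition by metis
  qed
  finally show ?thesis .
qed

lemma mult_dl_class_same:
  "k \<in> I \<Longrightarrow> x \<in> carrier (G k) \<Longrightarrow> y \<in> carrier (G k) \<Longrightarrow>
   dl_class k x \<otimes>\<^bsub>DL\<^esub> dl_class k y = dl_class k (x \<otimes>\<^bsub>G k\<^esub> y)"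
  using mult_dl_class[of k k x y k] rel_refl transition_id by simp

lemma one_direct_limit: "i \<in> I \<Longrightarrow> \<one>\<^bsub>DL\<^esub> = dl_class i \<one>\<^bsub>G i\<^esub>"
proof -
  assume i: "i \<in> I"
  define i0 where "i0 = (SOME i. i \<in> I)"
  have i0: "i0 \<in> I"
    unfolding i0_def using index_nonempty by (simp add: some_in_eq)
  obtain k where k: "k \<in> I" "rel i0 k" "rel i k"
    using rel_directed i i0 by blast
  have one: "dl_class l \<one>\<^bsub>G l\<^esub> = dl_class k \<one>\<^bsub>G k\<^esub>" if "l \<in> I" "rel l k" for l
  proof -
    interpret group_hom "G l" "G k" "f l k"
      using that k(1) transition_group_hom by blast
    show ?thesis
      using that k(1) by (simp add: dl_class_transition[of l k])
  qed
  have "\<one>\<^bsub>DL\<^esub> = dl_class i0 \<one>\<^bsub>G i0\<^esub>"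
    by (simp add: direct_limit_def dl_class_def i0_def)
  also have "\<dots> = dl_class i \<one>\<^bsub>G i\<^esub>"
    using one i i0 k by simp
  finally show ?thesis .
qed

lemma dl_classes_common_index:
  assumes "A \<in> carrier DL" "B \<in> carrier DL" "C \<in> carrier DL"
  obtains k x y z where "k \<in> I" "x \<in> carrier (G k)" "y \<in> carrier (G k)" "z \<in> carrier (G k)"
    "A = dl_class k x" "B = dl_class k y" "C = dl_class k z"
proof -
  obtain i x j y l z where
    A: "i \<in> I" "x \<in> carrier (G i)" "A = dl_class i x" and
    B: "j \<in> I" "y \<in> carrier (G j)" "B = dl_class j y" and
    C: "l \<in> I" "z \<in> carrier (G l)" "C = dl_class l z"
    using assms by (metis carrier_direct_limitE)
  obtain k where k: "k \<in> I" "rel i k" "rel j k" "rel l k"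
    using rel_upper_bound3 A(1) B(1) C(1) by blast
  show thesis
  proof (rule that)
    show "A = dl_class k (f i k x)" "B = dl_class k (f j k y)" "C = dl_class k (f l k z)"
      using A B C k dl_class_transition by simp_all
  qed (use A B C k transition_closed in simp_all)
qed

lemma group_direct_limit: "group DL"
proof (rule groupI)
  fix A B assume "A \<in> carrier DL" "B \<in> carrier DL"
  then obtain k x y where "k \<in> I" "x \<in> carrier (G k)" "y \<in> carrier (G k)"
    "A = dl_class k x" "B = dl_class k y"
    by (metis dl_classes_common_index)
  then show "A \<otimes>\<^bsub>DL\<^esub> B \<in> carrier DL"
    by (simp add: mult_dl_class_same dl_class_in_carrier monoid.m_closed group.is_monoid group_G)
next
  obtain i where "i \<in> I"
    using index_nonempty by blast
  then show "\<one>\<^bsub>DL\<^esub> \<in> carrier DL"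
    by (simp add: one_direct_limit dl_class_in_carrier monoid.one_closed group.is_monoid group_G)
next
  fix A B C assume "A \<in> carrier DL" "B \<in> carrier DL" "C \<in> carrier DL"
  then obtain k x y z where k: "k \<in> I" "x \<in> carrier (G k)" "y \<in> carrier (G k)" "z \<in> carrier (G k)"
    "A = dl_class k x" "B = dl_class k y" "C = dl_class k z"
    by (rule dl_classes_common_index)
  interpret group "G k"
    using k(1) group_G by blast
  show "A \<otimes>\<^bsub>DL\<^esub> B \<otimes>\<^bsub>DL\<^esub> C = A \<otimes>\<^bsub>DL\<^esub> (B \<otimes>\<^bsub>DL\<^esub> C)"
    using k by (simp add: mult_dl_class_same m_assoc)
next
  fix A assume "A \<in> carrier DL"
  then obtain i x where ix: "i \<in> I" "x \<in> carrier (G i)" "A = dl_class i x"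
    by (rule carrier_direct_limitE)
  interpret group "G i"
    using ix(1) group_G by blast
  show "\<one>\<^bsub>DL\<^esub> \<otimes>\<^bsub>DL\<^esub> A = A"
    using ix by (simp add: one_direct_limit mult_dl_class_same)
  show "\<exists>B\<in>carrier DL. B \<otimes>\<^bsub>DL\<^esub> A = \<one>\<^bsub>DL\<^esub>"
    using ix by (intro bexI[of _ "dl_class i (inv\<^bsub>G i\<^esub> x)"])
      (simp_all add: one_direct_limit mult_dl_class_same dl_class_in_carrier)
qed

lemma dl_class_group_hom: "i \<in> I \<Longrightarrow> group_hom (G i) DL (dl_class i)"
  by (simp add: group_hom_def group_hom_axioms_def group_G group_direct_limit homI
      dl_class_in_carrier mult_dl_class_same)

lemma gt_group_direct_limit:
  assumes gt: "\<And>i. i \<in> I \<Longrightarrow> gt_group (G i)"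
  shows "gt_group DL"
  unfolding gt_group_def
proof (intro conjI ballI impI)
  fix A assume A: "A \<in> carrier DL" "A \<noteq> \<one>\<^bsub>DL\<^esub>"
  from A(1) obtain i x where ix: "i \<in> I" "x \<in> carrier (G i)" "A = dl_class i x"
    by (rule carrier_direct_limitE)
  with A have "x \<noteq> \<one>\<^bsub>G i\<^esub>"
    by (auto simp: one_direct_limit)
  with ix gt have "gen_torsion (G i) x"
    by (simp add: gt_group_def)
  with ix A show "gen_torsion DL A"
    using group_hom.gen_torsion_hom_image[OF dl_class_group_hom] by blast
qed (rule group_direct_limit)

end

section \<open>The infinite dihedral group\<close>

text \<open>(a, s) stands for the isometry x \<mapsto> a + (-1)^s x of \<int>; since the theorem asks for a
  group on the naturals, elements are coded by a bijection \<int> \<times> bool \<rightarrow> nat.\<close>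

definition dihedral_mult :: "int \<times> bool \<Rightarrow> int \<times> bool \<Rightarrow> int \<times> bool" where
  "dihedral_mult p q = (fst p + (if snd p then - fst q else fst q), snd p \<noteq> snd q)"

definition encode_dihedral :: "int \<times> bool \<Rightarrow> nat" where
  "encode_dihedral p = 2 * int_encode (fst p) + (if snd p then 1 else 0)"

definition decode_dihedral :: "nat \<Rightarrow> int \<times> bool" where
  "decode_dihedral n = (int_decode (n div 2), odd n)"

lemma decode_encode_dihedral [simp]: "decode_dihedral (encode_dihedral p) = p"
  by (cases p) (simp add: decode_dihedral_def encode_dihedral_def)

lemma encode_decode_dihedral [simp]: "encode_dihedral (decode_dihedral n) = n"
  by (simp add: decode_dihedral_def encode_dihedral_def)

lemma encode_dihedral_eq_iff [simp]: "encode_dihedral p = encode_dihedral q \<longleftrightarrow> p = q"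
  by (metis decode_encode_dihedral)

definition inf_dihedral :: "nat monoid" where
  "inf_dihedral =
     \<lparr>carrier = UNIV,
      mult = \<lambda>m n. encode_dihedral (dihedral_mult (decode_dihedral m) (decode_dihedral n)),
      one = encode_dihedral (0, False)\<rparr>"

lemma inf_dihedral_simps [simp]:
  "carrier inf_dihedral = UNIV"
  "m \<otimes>\<^bsub>inf_dihedral\<^esub> n = encode_dihedral (dihedral_mult (decode_dihedral m) (decode_dihedral n))"
  "\<one>\<^bsub>inf_dihedral\<^esub> = encode_dihedral (0, False)"
  by (simp_all add: inf_dihedral_def)

definition dihedral_inv :: "int \<times> bool \<Rightarrow> int \<times> bool" where
  "dihedral_inv p = (if snd p then p else (- fst p, False))"

lemma group_inf_dihedral: "group inf_dihedral"
proof (rule groupI)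
  fix x y z :: nat
  show "x \<otimes>\<^bsub>inf_dihedral\<^esub> y \<otimes>\<^bsub>inf_dihedral\<^esub> z = x \<otimes>\<^bsub>inf_dihedral\<^esub> (y \<otimes>\<^bsub>inf_dihedral\<^esub> z)"
    by (simp add: dihedral_mult_def)
  show "\<one>\<^bsub>inf_dihedral\<^esub> \<otimes>\<^bsub>inf_dihedral\<^esub> x = x"
    by (simp add: dihedral_mult_def)
  show "\<exists>y\<in>carrier inf_dihedral. y \<otimes>\<^bsub>inf_dihedral\<^esub> x = \<one>\<^bsub>inf_dihedral\<^esub>"
    by (rule bexI[of _ "encode_dihedral (dihedral_inv (decode_dihedral x))"])
      (auto simp: dihedral_mult_def dihedral_inv_def)
qed auto

lemma inv_inf_dihedral [simp]:
  "inv\<^bsub>inf_dihedral\<^esub> n = encode_dihedral (dihedral_inv (decode_dihedral n))"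
  by (rule group.inv_equality[OF group_inf_dihedral]) (auto simp: dihedral_mult_def dihedral_inv_def)

lemma gt_group_inf_dihedral: "gt_group inf_dihedral"
  unfolding gt_group_def
proof (intro conjI ballI impI)
  fix g assume g: "g \<noteq> \<one>\<^bsub>inf_dihedral\<^esub>"
  obtain a s where as: "decode_dihedral g = (a, s)"
    by fastforce
  txt \<open>g g = 1 for a reflection, g g^r = 1 for a translation and the reflection r x = -x.\<close>
  define xs where "xs = [encode_dihedral (0, False), encode_dihedral (0, \<not> s)]"
  have "conj_prod inf_dihedral g xs = \<one>\<^bsub>inf_dihedral\<^esub>"
    using as by (cases s) (simp_all add: xs_def conjg_def dihedral_mult_def dihedral_inv_def)
  with g show "gen_torsion inf_dihedral g"
    unfolding gen_torsion_iff_conj_prod by (intro conjI exI[of _ xs]) (simp_all add: xs_def)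
qed (rule group_inf_dihedral)

definition dihedral_translations :: "nat set" where
  "dihedral_translations = {n. \<not> snd (decode_dihedral n)}"

lemma subgroup_dihedral_translations: "subgroup dihedral_translations inf_dihedral"
  by (rule group.subgroupI[OF group_inf_dihedral])
    (auto simp: dihedral_translations_def dihedral_mult_def dihedral_inv_def
      intro!: exI[of _ "encode_dihedral (0, False)"])

lemma conj_prod_dihedral_translations:
  assumes "set xs \<subseteq> dihedral_translations"
  shows "conj_prod (inf_dihedral\<lparr>carrier := dihedral_translations\<rparr>) (encode_dihedral (1, False)) xs
    = encode_dihedral (int (length xs), False)"
  using assms
proof (induction xs)
  case (Cons x xs)
  have "inv\<^bsub>inf_dihedral\<lparr>carrier := dihedral_translations\<rparr>\<^esub> x = inv\<^bsub>inf_dihedral\<^esub> x"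
    using group.m_inv_consistent[OF group_inf_dihedral subgroup_dihedral_translations] Cons.prems by simp
  with Cons show ?case
    by (simp add: conjg_def dihedral_mult_def dihedral_inv_def dihedral_translations_def)
qed simp

lemma not_gt_group_dihedral_translations:
  "\<not> gt_group (inf_dihedral\<lparr>carrier := dihedral_translations\<rparr>)"
proof
  assume "gt_group (inf_dihedral\<lparr>carrier := dihedral_translations\<rparr>)"
  moreover have "encode_dihedral (1, False) \<in> dihedral_translations"
    by (simp add: dihedral_translations_def)
  ultimately have "gen_torsion (inf_dihedral\<lparr>carrier := dihedral_translations\<rparr>) (encode_dihedral (1, False))"
    unfolding gt_group_def by simp
  then obtain xs where "xs \<noteq> []" "set xs \<subseteq> dihedral_translations"
    "conj_prod (inf_dihedral\<lparr>carrier := dihedral_translations\<rparr>) (encode_dihedral (1, False)) xs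
      = encode_dihedral (0, False)"
    unfolding gen_torsion_iff_conj_prod by auto
  then show False
    by (simp add: conj_prod_dihedral_translations)
qed

theorem theorem3p2:
  shows "(\<forall>(G :: ('a, 'b) monoid_scheme) N. gt_group G \<and> N \<lhd> G \<longrightarrow> gt_group (G Mod N))
       \<and> (\<forall>(I :: 'i set) rel (G :: 'i \<Rightarrow> ('c, 'd) monoid_scheme) f.
            directed_system I rel G f \<and> (\<forall>i\<in>I. gt_group (G i))
            \<longrightarrow> gt_group (direct_limit I rel G f))
       \<and> (\<forall>(K :: ('k, 'km) monoid_scheme) (G :: ('g, 'gm) monoid_scheme) (Q :: ('q, 'qm) monoid_scheme) \<iota> \<pi>.
            group K \<and> group G \<and> group Q \<and>
            \<iota> \<in> hom K G \<and> inj_on \<iota> (carrier K) \<and>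
            \<pi> \<in> hom G Q \<and> \<pi> ` carrier G = carrier Q \<and>
            \<iota> ` carrier K = kernel G Q \<pi> \<and>
            gt_group K \<and> gt_group Q
            \<longrightarrow> gt_group G)
       \<and> (\<exists>(G :: nat monoid) H. gt_group G \<and> subgroup H G \<and> \<not> gt_group (G\<lparr>carrier := H\<rparr>))"
proof (intro conjI allI impI)
  show "gt_group (G Mod N)" if "gt_group G \<and> N \<lhd> G" for G :: "('a, 'b) monoid_scheme" and N
    using that by (blast intro: gt_group_FactGroup)
  show "gt_group (direct_limit I rel G f)"
    if "directed_system I rel G f \<and> (\<forall>i\<in>I. gt_group (G i))"
    for I :: "'i set" and rel and G :: "'i \<Rightarrow> ('c, 'd) monoid_scheme" and f
    using that group_direct_systemI group_direct_system.gt_group_direct_limit by blast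
  show "gt_group G"
    if "group K \<and> group G \<and> group Q \<and>
        \<iota> \<in> hom K G \<and> inj_on \<iota> (carrier K) \<and>
        \<pi> \<in> hom G Q \<and> \<pi> ` carrier G = carrier Q \<and>
        \<iota> ` carrier K = kernel G Q \<pi> \<and>
        gt_group K \<and> gt_group Q"
    for K :: "('k, 'km) monoid_scheme" and G :: "('g, 'gm) monoid_scheme"
      and Q :: "('q, 'qm) monoid_scheme" and \<iota> \<pi>
    using that
    by (elim conjE, intro gt_group_extension[of G Q \<pi>])
      (auto intro: gen_torsion_image_of_gt_group[of K G \<iota>])
  show "\<exists>(G :: nat monoid) H. gt_group G \<and> subgroup H G \<and> \<not> gt_group (G\<lparr>carrier := H\<rparr>)"
    using gt_group_inf_dihedral subgroup_dihedral_translations not_gt_group_dihedral_translations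
    by blast
qed

end
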